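(* Let $d,n\ge 1$, let $\kappa\ge 1$ divide $d$, set $d'=d/\kappa$, let $r\ge 2$ and $\mathbf r=(r,\dots,r)\in\mathbb{N}^d$. Let $A_1,\dots,A_{d'}\in\mathbb{R}^{m\times n^\kappa}$ and let $\mathcal{A}(\mathcal{Y})=\mathcal{Y}\times_1A_1\times_2\cdots\times_{d'}A_{d'}$ for $\mathcal{Y}\in\mathbb{R}^{n^\kappa\times\cdots\times n^\kappa}$ ($d'$ modes). Suppose that each $A_i$ has the RIP$(\varepsilon,\mathcal{S}_{1,2})$ property, and let $\delta=4d'r^d\varepsilon$ with $\delta<1$. Then $\mathcal{A}\circ\mathcal{R}$ has the TRIP$(\delta,\mathbf r)$ property, i.e. $$(1-\delta)\|\mathcal{X}\|^2\le\|\mathcal{A}(\mathcal{R}(\mathcal{X}))\|^2\le(1+\delta)\|\mathcal{X}\|^2$$ for all $\mathcal{X}\in\mathbb{R}^{n\times\cdots\times n}$ ($d$ modes) with HOSVD rank at most $\mathbf r$.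
   Context: $\|\cdot\|$ denotes the Frobenius norm of a tensor. The $j$-mode product of $\mathcal{X}\in\mathbb{R}^{p_1\times\cdots\times p_D}$ with $U\in\mathbb{R}^{q\times p_j}$ is the tensor $\mathcal{X}\times_jU\in\mathbb{R}^{p_1\times\cdots\times q\times\cdots\times p_D}$ with entries $(\mathcal{X}\times_jU)_{i_1,\dots,\ell,\dots,i_D}=\sum_{i_j=1}^{p_j}\mathcal{X}_{i_1,\dots,i_j,\dots,i_D}U_{\ell,i_j}$. A $d$-mode tensor $\mathcal{X}\in\mathbb{R}^{n\times\cdots\times n}$ has HOSVD (multilinear) rank at most $(r,\dots,r)$ if there are subspaces $\mathcal{U}_1,\dots,\mathcal{U}_d\subset\mathbb{R}^n$ of dimension $r$ with $\mathcal{X}\in\mathcal{U}_1\otimes\cdots\otimes\mathcal{U}_d$. The reshaping operator $\mathcal{R}:\mathbb{R}^{n\times\cdots\times n}\ (d\text{ modes})\to\mathbb{R}^{n^\kappa\times\cdots\times n^\kappa}\ (d'\text{ modes})$ is the unique linear map with $\mathcal{R}(\mathbf{x}^1\circ\cdots\circ\mathbf{x}^d)=\bigcirc_{i=1}^{d'}\big(\mathbf{x}^{\kappa(i-1)+1}\otimes\cdots\otimes\mathbf{x}^{\kappa i}\big)$, where $\circ$ is the outer product and $\otimes$ the Kronecker product of vectors. Let $\mathcal{S}_1=\{\mathbf{u}^1\otimes\cdots\otimes\mathbf{u}^\kappa:\mathbf{u}^i\in\mathbb{S}^{n-1}\}\subset\mathbb{R}^{n^\kappa}$, $\mathcal{S}_2=\{(\mathbf{x}+\mathbf{y})/\|\mathbf{x}+\mathbf{y}\|_2:\mathbf{x},\mathbf{y}\in\mathcal{S}_1,\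 \langle\mathbf{x},\mathbf{y}\rangle=0\}$ and $\mathcal{S}_{1,2}=\mathcal{S}_1\cup\mathcal{S}_2$. A linear map $L$ has the RIP$(\varepsilon,\mathcal{S})$ property if $(1-\varepsilon)\|s\|^2\le\|L(s)\|^2\le(1+\varepsilon)\|s\|^2$ for all $s\in\mathcal{S}$. A linear map has the TRIP$(\delta,\mathbf r)$ property if $(1-\delta)\|\mathcal{X}\|^2\le\|\cdot(\mathcal{X})\|^2\le(1+\delta)\|\mathcal{X}\|^2$ for all $\mathcal{X}$ of HOSVD rank at most $\mathbf r$. *)

theory Defs
  imports "HOL-Analysis.Analysis"
begin

text \<open>A vector of R^N is a function nat => real vanishing outside {0..<N}.
 A tensor with mode sizes dims (a list) is a function nat list => real vanishing
 outside the index set tensor_idx dims.\<close>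

definition tensor_idx :: "nat list \<Rightarrow> nat list set" where
  "tensor_idx dims = {is. length is = length dims \<and> (\<forall>k<length dims. is ! k < dims ! k)}"

definition fro_sq :: "nat list \<Rightarrow> (nat list \<Rightarrow> real) \<Rightarrow> real" where
  "fro_sq dims X = (\<Sum>is\<in>tensor_idx dims. (X is)\<^sup>2)"

definition vec_norm_sq :: "nat \<Rightarrow> (nat \<Rightarrow> real) \<Rightarrow> real" where
  "vec_norm_sq N x = (\<Sum>i<N. (x i)\<^sup>2)"

definition vec_inner :: "nat \<Rightarrow> (nat \<Rightarrow> real) \<Rightarrow> (nat \<Rightarrow> real) \<Rightarrow> real" where
  "vec_inner N x y = (\<Sum>i<N. x i * y i)"

definition is_vec :: "nat \<Rightarrow> (nat \<Rightarrow> real) \<Rightarrow> bool" where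
  "is_vec N x \<longleftrightarrow> (\<forall>i\<ge>N. x i = 0)"

definition vec_span :: "('a \<Rightarrow> real) set \<Rightarrow> ('a \<Rightarrow> real) set" where
  "vec_span S = {v. \<exists>F c. finite F \<and> F \<subseteq> S \<and> v = (\<lambda>i. \<Sum>w\<in>F. c w * w i)}"

definition subspace_dim :: "nat \<Rightarrow> nat \<Rightarrow> (nat \<Rightarrow> real) set \<Rightarrow> bool" where
  "subspace_dim n r U \<longleftrightarrow>
     (\<exists>b :: nat \<Rightarrow> nat \<Rightarrow> real.
        (\<forall>j<r. is_vec n (b j)) \<and>
        (\<forall>c. (\<forall>i. (\<Sum>j<r. c j * b j i) = 0) \<longrightarrow> (\<forall>j<r. c j = 0)) \<and>
        U = vec_span (b ` {..<r}))"

definition outer :: "nat \<Rightarrow> nat \<Rightarrow> (nat \<Rightarrow> nat \<Rightarrow> real) \<Rightarrow> nat list \<Rightarrow> real" where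
  "outer n d xs = (\<lambda>is. if is \<in> tensor_idx (replicate d n) then (\<Prod>k<d. xs k (is ! k)) else 0)"

text \<open>HOSVD (multilinear) rank at most (r,...,r): X lies in U_1 (x) ... (x) U_d
 (the span of outer products of vectors from the U_k) for subspaces U_k of R^n of dimension r.\<close>
definition hosvd_rank_le :: "nat \<Rightarrow> nat \<Rightarrow> nat \<Rightarrow> (nat list \<Rightarrow> real) \<Rightarrow> bool" where
  "hosvd_rank_le n d r X \<longleftrightarrow>
     (\<exists>U :: nat \<Rightarrow> (nat \<Rightarrow> real) set.
        (\<forall>k<d. subspace_dim n r (U k)) \<and>
        X \<in> vec_span {outer n d xs | xs. \<forall>k<d. xs k \<in> U k})"

text \<open>j-mode product (0-based mode j) of a tensor with mode sizes dims with a
 q x (dims!j) matrix U (a function row => column => real).\<close>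
definition mode_prod :: "nat list \<Rightarrow> nat \<Rightarrow> nat \<Rightarrow> (nat \<Rightarrow> nat \<Rightarrow> real)
                          \<Rightarrow> (nat list \<Rightarrow> real) \<Rightarrow> nat list \<Rightarrow> real" where
  "mode_prod dims j q U X = (\<lambda>is. if is \<in> tensor_idx (dims[j := q])
        then (\<Sum>i<dims ! j. X (is[j := i]) * U (is ! j) i) else 0)"

text \<open>The map A(Y) = Y x_1 A_1 x_2 ... x_{d'} A_{d'} for a d'-mode tensor Y with all
 mode sizes N and m x N matrices As 0, ..., As (d'-1) (As j is A_{j+1}).\<close>
definition multi_mode :: "nat \<Rightarrow> nat \<Rightarrow> nat \<Rightarrow> (nat \<Rightarrow> nat \<Rightarrow> nat \<Rightarrow> real)
                          \<Rightarrow> (nat list \<Rightarrow> real) \<Rightarrow> nat list \<Rightarrow> real" where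
  "multi_mode d' m N As Y =
     fold (\<lambda>j Z. mode_prod (replicate j m @ replicate (d' - j) N) j m (As j) Z) [0..<d'] Y"

text \<open>Index j < n^kappa of the Kronecker product of kappa vectors of R^n corresponds to the
 base-n digits (most significant first): (x^1 (x) ... (x) x^kappa)_j = prod_l x^l_{digit l}.\<close>
definition kdigits :: "nat \<Rightarrow> nat \<Rightarrow> nat \<Rightarrow> nat list" where
  "kdigits n \<kappa> j = map (\<lambda>l. j div n ^ (\<kappa> - 1 - l) mod n) [0..<\<kappa>]"

definition kron :: "nat \<Rightarrow> nat \<Rightarrow> (nat \<Rightarrow> nat \<Rightarrow> real) \<Rightarrow> nat \<Rightarrow> real" where
  "kron n \<kappa> us = (\<lambda>j. if j < n ^ \<kappa> then (\<Prod>l<\<kappa>. us l (kdigits n \<kappa> j ! l)) else 0)"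

text \<open>Reshaping R: d modes of size n to d' = d div kappa modes of size n^kappa; it is the
 linear map sending x^1 o ... o x^d to the outer product of the kron's of consecutive groups
 of kappa vectors (with the above Kronecker convention).\<close>
definition reshape :: "nat \<Rightarrow> nat \<Rightarrow> nat \<Rightarrow> (nat list \<Rightarrow> real) \<Rightarrow> nat list \<Rightarrow> real" where
  "reshape n d \<kappa> X = (\<lambda>js. if js \<in> tensor_idx (replicate (d div \<kappa>) (n ^ \<kappa>))
        then X (concat (map (kdigits n \<kappa>) js)) else 0)"

definition S1 :: "nat \<Rightarrow> nat \<Rightarrow> (nat \<Rightarrow> real) set" where
  "S1 n \<kappa> = {kron n \<kappa> us | us. \<forall>l<\<kappa>. is_vec n (us l) \<and> vec_norm_sq n (us l) = 1}"

definition S2 :: "nat \<Rightarrow> nat \<Rightarrow> (nat \<Rightarrow> real) set" where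
  "S2 n \<kappa> = {(\<lambda>i. (x i + y i) / sqrt (vec_norm_sq (n ^ \<kappa>) (\<lambda>i. x i + y i))) | x y.
               x \<in> S1 n \<kappa> \<and> y \<in> S1 n \<kappa> \<and> vec_inner (n ^ \<kappa>) x y = 0}"

definition S12 :: "nat \<Rightarrow> nat \<Rightarrow> (nat \<Rightarrow> real) set" where
  "S12 n \<kappa> = S1 n \<kappa> \<union> S2 n \<kappa>"

definition mat_vec :: "nat \<Rightarrow> nat \<Rightarrow> (nat \<Rightarrow> nat \<Rightarrow> real) \<Rightarrow> (nat \<Rightarrow> real) \<Rightarrow> nat \<Rightarrow> real" where
  "mat_vec m N M s = (\<lambda>l. if l < m then (\<Sum>i<N. M l i * s i) else 0)"

definition RIP :: "nat \<Rightarrow> nat \<Rightarrow> (nat \<Rightarrow> nat \<Rightarrow> real) \<Rightarrow> real \<Rightarrow> (nat \<Rightarrow> real) set \<Rightarrow> bool" where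
  "RIP m N M \<epsilon> S \<longleftrightarrow> (\<forall>s\<in>S.
      (1 - \<epsilon>) * vec_norm_sq N s \<le> vec_norm_sq m (mat_vec m N M s) \<and>
      vec_norm_sq m (mat_vec m N M s) \<le> (1 + \<epsilon>) * vec_norm_sq N s)"

end

theory Submission
  imports Defs
begin

(* Orthonormalizing bases of the factor subspaces writes X as a sum of outer products of
   orthonormal factor vectors; reshaping turns it into a sum of outer products with d' modes
   whose g-th factors are Kronecker products of kappa of them, an orthonormal family in S1 of
   at most r^kappa vectors.  Grouping the terms by their g-th factor, the mode-g product with
   A_g changes the squared norm by the Gram matrix deviation of A_g on this family, weighted
   by a positive semidefinite matrix.  By the RIP on S1 and, through polarization, on S2 every
   entry of that deviation is at most 2 epsilon, so each mode changes the squared norm at most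
   by the factor 1 - a or 1 + a with a = 2 epsilon r^kappa, and (1 - a)^d' and (1 + a)^d' lie
   between 1 - delta and 1 + delta. *)

lemma tensor_idx_Nil [simp]: "tensor_idx [] = {[]}"
  by (auto simp: tensor_idx_def)

lemma tensor_idx_Cons: "tensor_idx (x # xs) = (\<lambda>(i, ix). i # ix) ` ({..<x} \<times> tensor_idx xs)"
proof (rule set_eqI, rule iffI)
  fix js assume js: "js \<in> tensor_idx (x # xs)"
  then obtain i ix where "js = i # ix"
    unfolding tensor_idx_def by (cases js) auto
  moreover from js this have "i < x" and "ix \<in> tensor_idx xs"
    unfolding tensor_idx_def by (force, fastforce)
  ultimately show "js \<in> (\<lambda>(i, ix). i # ix) ` ({..<x} \<times> tensor_idx xs)" by force
qed (auto simp: tensor_idx_def nth_Cons split: nat.splits)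

lemma finite_tensor_idx [simp]: "finite (tensor_idx dims)"
  by (induction dims) (auto simp: tensor_idx_Cons)

lemma length_tensor_idx: "ix \<in> tensor_idx dims \<Longrightarrow> length ix = length dims"
  by (simp add: tensor_idx_def)

lemma sum_tensor_idx_Cons:
  "(\<Sum>ix\<in>tensor_idx (x # xs). f ix) = (\<Sum>i<x. \<Sum>ix\<in>tensor_idx xs. f (i # ix))"
proof -
  have inj: "inj_on (\<lambda>(i, ix). i # ix) ({..<x} \<times> tensor_idx xs)"
    by (auto simp: inj_on_def)
  show ?thesis
    unfolding tensor_idx_Cons sum.reindex[OF inj] by (simp add: sum.cartesian_product comp_def split_beta)
qed

lemma sum_tensor_idx_append:
  "(\<Sum>ix\<in>tensor_idx (xs @ ys). f ix) = (\<Sum>a\<in>tensor_idx xs. \<Sum>b\<in>tensor_idx ys. f (a @ b))"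
  by (induction xs arbitrary: f) (simp_all add: sum_tensor_idx_Cons)

lemma card_tensor_idx: "card (tensor_idx dims) = prod_list dims"
proof (induction dims)
  case (Cons x xs)
  have "card (tensor_idx (x # xs)) = (\<Sum>ix\<in>tensor_idx (x # xs). 1)" by simp
  also have "\<dots> = x * prod_list xs" unfolding sum_tensor_idx_Cons using Cons by simp
  finally show ?case by simp
qed simp

lemma sum_tensor_idx_prod:
  "(\<Sum>ix\<in>tensor_idx dims. \<Prod>k<length dims. f k (ix ! k))
     = (\<Prod>k<length dims. \<Sum>i<dims ! k. (f k i :: real))"
proof (induction dims arbitrary: f)
  case (Cons x xs)
  have "(\<Sum>ix\<in>tensor_idx (x # xs). \<Prod>k<length (x # xs). f k (ix ! k))
      = (\<Sum>i<x. f 0 i) * (\<Sum>ix\<in>tensor_idx xs. \<Prod>k<length xs. f (Suc k) (ix ! k))"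
    unfolding sum_tensor_idx_Cons
    by (simp only: length_Cons prod.lessThan_Suc_shift nth_Cons_0 nth_Cons_Suc sum_product)
  also have "\<dots> = (\<Prod>k<length (x # xs). \<Sum>i<(x # xs) ! k. f k i)"
    using Cons[of "\<lambda>k. f (Suc k)"]
    by (simp only: length_Cons prod.lessThan_Suc_shift nth_Cons_0 nth_Cons_Suc)
  finally show ?case .
qed simp

lemma list_update_in_tensor_idx:
  assumes "ix \<in> tensor_idx (dims[j := q])" "i < dims ! j"
  shows "ix[j := i] \<in> tensor_idx dims"
proof -
  have "ix[j := i] ! k < dims ! k" if "k < length dims" for k
    using assms that unfolding tensor_idx_def by (cases "k = j") auto
  then show ?thesis
    using assms(1) by (simp add: tensor_idx_def)
qed

lemma sum_tensor_idx_split_at: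
  assumes "j < length dims"
  shows "(\<Sum>ix\<in>tensor_idx dims. f ix)
           = (\<Sum>ix\<in>tensor_idx (dims[j := 1]). \<Sum>i<dims ! j. f (ix[j := i]))"
proof -
  obtain xs N ys where dims: "dims = xs @ N # ys" and j: "j = length xs"
    using assms by (metis id_take_nth_drop length_take min.absorb4)
  have "(\<Sum>ix\<in>tensor_idx dims. f ix)
      = (\<Sum>a\<in>tensor_idx xs. \<Sum>b\<in>tensor_idx ys. \<Sum>i<N. f (a @ i # b))"
    unfolding dims sum_tensor_idx_append sum_tensor_idx_Cons
    by (simp add: sum.swap[where A = "{..<N}"])
  also have "\<dots> = (\<Sum>ix\<in>tensor_idx (dims[j := 1]). \<Sum>i<dims ! j. f (ix[j := i]))"
    unfolding dims j
    by (simp add: list_update_append sum_tensor_idx_append sum_tensor_idx_Cons length_tensor_idx)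
  finally show ?thesis .
qed

section \<open>Digit expansions, Kronecker products and reshaping\<close>

lemma mod_power_div_power_mod:
  fixes n j e K :: nat
  assumes "n \<ge> 1" "e < K"
  shows "(j mod n ^ K) div n ^ e mod n = j div n ^ e mod n"
proof -
  define b where "b = n ^ (K - e)"
  have K: "n ^ K = n ^ e * b"
    unfolding b_def using assms by (simp add: power_add[symmetric])
  have "j mod n ^ K = n ^ e * (j div n ^ e mod b) + j mod n ^ e"
    unfolding K by (rule mod_mult2_eq)
  then have "(j mod n ^ K) div n ^ e = j div n ^ e mod b"
    using assms by simp
  moreover have "n dvd b" unfolding b_def using assms by simp
  ultimately show ?thesis by (simp add: mod_mod_cancel)
qed

lemma length_kdigits [simp]: "length (kdigits n \<kappa> j) = \<kappa>"
  by (simp add: kdigits_def)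

lemma kdigits_less: "n \<ge> 1 \<Longrightarrow> l < \<kappa> \<Longrightarrow> kdigits n \<kappa> j ! l < n"
  by (simp add: kdigits_def)

lemma kdigits_Suc:
  assumes "n \<ge> 1"
  shows "kdigits n (Suc \<kappa>) j = (j div n ^ \<kappa> mod n) # kdigits n \<kappa> (j mod n ^ \<kappa>)"
proof -
  have "[0..<Suc \<kappa>] = 0 # map Suc [0..<\<kappa>]"
    by (simp add: map_Suc_upt upt_conv_Cons)
  then show ?thesis
    unfolding kdigits_def using mod_power_div_power_mod[OF assms] by (auto intro!: map_cong)
qed

lemma sum_kdigits:
  assumes "n \<ge> 1"
  shows "(\<Sum>j<n ^ \<kappa>. f (kdigits n \<kappa> j)) = (\<Sum>a\<in>tensor_idx (replicate \<kappa> n). (f a :: real))"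
proof (induction \<kappa> arbitrary: f)
  case 0
  then show ?case by (simp add: kdigits_def)
next
  case (Suc \<kappa>)
  define M where "M = n ^ \<kappa>"
  have "(\<Sum>j<n ^ Suc \<kappa>. f (kdigits n (Suc \<kappa>) j))
      = (\<Sum>q<n. \<Sum>j\<in>{q * M..<q * M + M}. f (kdigits n (Suc \<kappa>) j))"
    using sum.nat_group[of "\<lambda>j. f (kdigits n (Suc \<kappa>) j)" M n] by (simp add: M_def mult.commute)
  also have "\<dots> = (\<Sum>q<n. \<Sum>r<M. f (kdigits n (Suc \<kappa>) (q * M + r)))"
    by (simp add: sum.atLeastLessThan_shift_0 atLeast0LessThan comp_def)
  also have "\<dots> = (\<Sum>q<n. \<Sum>r<M. f (q # kdigits n \<kappa> r))"
    using assms by (intro sum.cong refl) (simp add: kdigits_Suc M_def)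
  also have "\<dots> = (\<Sum>a\<in>tensor_idx (replicate (Suc \<kappa>) n). f a)"
    using Suc[of "\<lambda>a. f (_ # a)"] by (simp add: sum_tensor_idx_Cons M_def)
  finally show ?case .
qed

lemma sum_concat_kdigits:
  assumes "n \<ge> 1"
  shows "(\<Sum>js\<in>tensor_idx (replicate d' (n ^ \<kappa>)). g (concat (map (kdigits n \<kappa>) js)))
       = (\<Sum>ix\<in>tensor_idx (replicate (d' * \<kappa>) n). (g ix :: real))"
proof (induction d' arbitrary: g)
  case (Suc d')
  have "(\<Sum>js\<in>tensor_idx (replicate (Suc d') (n ^ \<kappa>)). g (concat (map (kdigits n \<kappa>) js)))
      = (\<Sum>j<n ^ \<kappa>. \<Sum>b\<in>tensor_idx (replicate (d' * \<kappa>) n). g (kdigits n \<kappa> j @ b))"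
    using Suc[where g = "\<lambda>b. g (kdigits n \<kappa> _ @ b)"] by (simp add: sum_tensor_idx_Cons)
  also have "\<dots> = (\<Sum>a\<in>tensor_idx (replicate \<kappa> n). \<Sum>b\<in>tensor_idx (replicate (d' * \<kappa>) n). g (a @ b))"
    by (rule sum_kdigits[OF assms])
  also have "\<dots> = (\<Sum>ix\<in>tensor_idx (replicate (Suc d' * \<kappa>) n). g ix)"
    by (simp add: sum_tensor_idx_append replicate_add)
  finally show ?case .
qed simp

lemma nth_concat_blocks:
  assumes "\<forall>xs\<in>set xss. length xs = \<kappa>" "g < length xss" "l < \<kappa>"
  shows "concat xss ! (g * \<kappa> + l) = xss ! g ! l"
  using assms
proof (induction xss arbitrary: g)
  case (Cons xs xss)
  then show ?case by (cases g) (auto simp: nth_append)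
qed simp

lemma prod_lessThan_mult_blocks:
  fixes F :: "nat \<Rightarrow> 'a :: comm_monoid_mult"
  shows "(\<Prod>k<d' * \<kappa>. F k) = (\<Prod>g<d'. \<Prod>l<\<kappa>. F (g * \<kappa> + l))"
  using prod.nat_group[of F \<kappa> d']
  by (simp add: prod.atLeastLessThan_shift_0 atLeast0LessThan comp_def add.commute)

lemma concat_kdigits_in_tensor_idx:
  assumes "n \<ge> 1" and js: "js \<in> tensor_idx (replicate d' (n ^ \<kappa>))"
  shows "concat (map (kdigits n \<kappa>) js) \<in> tensor_idx (replicate (d' * \<kappa>) n)"
proof -
  have len: "length js = d'"
    using js by (simp add: length_tensor_idx)
  have "concat (map (kdigits n \<kappa>) js) ! (g * \<kappa> + l) < n" if "g < d'" "l < \<kappa>" for g l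
    using that len assms(1) by (simp add: nth_concat_blocks kdigits_less)
  moreover have "k = k div \<kappa> * \<kappa> + k mod \<kappa>" "k div \<kappa> < d'" "k mod \<kappa> < \<kappa>"
    if "k < d' * \<kappa>" for k
    using that by (simp_all add: less_mult_imp_div_less) (metis mod_less_divisor mult_0_right not_less0 gr0I)
  ultimately have "concat (map (kdigits n \<kappa>) js) ! k < n" if "k < d' * \<kappa>" for k
    using that by metis
  then show ?thesis
    using len by (simp add: tensor_idx_def length_concat o_def sum_list_triv)
qed

lemma fro_sq_reshape:
  assumes "n \<ge> 1" "\<kappa> \<ge> 1"
  shows "fro_sq (replicate d' (n ^ \<kappa>)) (reshape n (d' * \<kappa>) \<kappa> X) = fro_sq (replicate (d' * \<kappa>) n) X"
  using assms sum_concat_kdigits[OF assms(1), where g = "\<lambda>ix. (X ix)\<^sup>2" and d' = d']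
  by (simp add: fro_sq_def reshape_def)

lemma kron_cong: "(\<And>l. l < \<kappa> \<Longrightarrow> us l = vs l) \<Longrightarrow> kron n \<kappa> us = kron n \<kappa> vs"
  unfolding kron_def by (intro ext) (auto intro!: prod.cong)

lemma vec_inner_kron:
  assumes "n \<ge> 1"
  shows "vec_inner (n ^ \<kappa>) (kron n \<kappa> us) (kron n \<kappa> vs) = (\<Prod>l<\<kappa>. vec_inner n (us l) (vs l))"
proof -
  have "vec_inner (n ^ \<kappa>) (kron n \<kappa> us) (kron n \<kappa> vs)
      = (\<Sum>j<n ^ \<kappa>. (\<lambda>a. \<Prod>l<\<kappa>. us l (a ! l) * vs l (a ! l)) (kdigits n \<kappa> j))"
    unfolding vec_inner_def kron_def by (auto intro!: sum.cong simp: prod.distrib)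
  also have "\<dots> = (\<Sum>a\<in>tensor_idx (replicate \<kappa> n). \<Prod>l<\<kappa>. us l (a ! l) * vs l (a ! l))"
    by (rule sum_kdigits[OF assms])
  also have "\<dots> = (\<Prod>l<\<kappa>. vec_inner n (us l) (vs l))"
    using sum_tensor_idx_prod[where dims = "replicate \<kappa> n" and f = "\<lambda>l i. us l i * vs l i"]
    by (simp add: vec_inner_def)
  finally show ?thesis .
qed

section \<open>Inner products and the RIP on S1 and S2\<close>

lemma vec_inner_commute: "vec_inner N x y = vec_inner N y x"
  by (simp add: vec_inner_def mult.commute)

lemma vec_norm_sq_eq_inner: "vec_norm_sq N x = vec_inner N x x"
  by (simp add: vec_norm_sq_def vec_inner_def power2_eq_square)

lemma vec_norm_sq_nonneg: "vec_norm_sq N x \<ge> 0"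
  by (simp add: vec_norm_sq_def sum_nonneg)

lemma vec_inner_sum_left:
  "vec_inner N (\<lambda>x. \<Sum>i\<in>S. c i * f i x) y = (\<Sum>i\<in>S. c i * vec_inner N (f i) y)"
  unfolding vec_inner_def
  by (simp add: sum_distrib_right sum_distrib_left sum.swap[where A = "{..<N}"] mult.assoc)

lemma vec_inner_diff_left: "vec_inner N (\<lambda>x. a x - b x) y = vec_inner N a y - vec_inner N b y"
  unfolding vec_inner_def by (simp add: left_diff_distrib sum_subtractf)

lemma vec_inner_divide_left: "vec_inner N (\<lambda>x. a x / c) y = vec_inner N a y / c"
  unfolding vec_inner_def by (simp add: sum_divide_distrib)

lemma vec_norm_sq_add:
  "vec_norm_sq N (\<lambda>i. x i + y i) = vec_norm_sq N x + vec_norm_sq N y + 2 * vec_inner N x y"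
  unfolding vec_norm_sq_def vec_inner_def
  by (simp add: power2_sum sum.distrib sum_distrib_left mult.assoc)

lemma vec_norm_sq_divide: "vec_norm_sq N (\<lambda>i. x i / c) = vec_norm_sq N x / c\<^sup>2"
  unfolding vec_norm_sq_def by (simp add: power_divide sum_divide_distrib)

lemma vec_norm_sq_eq_0_iff:
  assumes "is_vec n w"
  shows "vec_norm_sq n w = 0 \<longleftrightarrow> w = (\<lambda>x. 0)"
proof
  assume "vec_norm_sq n w = 0"
  then have "\<forall>i<n. w i = 0"
    unfolding vec_norm_sq_def by (subst (asm) sum_nonneg_eq_0_iff) auto
  with assms show "w = (\<lambda>x. 0)"
    unfolding is_vec_def by (metis not_less)
qed (simp add: vec_norm_sq_def)

lemma mat_vec_add_divide:
  "mat_vec m N A (\<lambda>i. (x i + y i) / c) = (\<lambda>l. (mat_vec m N A x l + mat_vec m N A y l) / c)"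
  unfolding mat_vec_def
  by (auto simp: sum_divide_distrib sum.distrib[symmetric] distrib_left intro!: sum.cong)

lemma vec_norm_sq_S1:
  assumes "n \<ge> 1" "x \<in> S1 n \<kappa>"
  shows "vec_norm_sq (n ^ \<kappa>) x = 1"
  using assms by (auto simp: S1_def vec_norm_sq_eq_inner vec_inner_kron)

lemma RIP_unit_deviation:
  assumes "RIP m N A \<epsilon> S" "s \<in> S" "vec_norm_sq N s = 1"
  shows "\<bar>vec_norm_sq m (mat_vec m N A s) - 1\<bar> \<le> \<epsilon>"
  using assms by (auto simp: RIP_def abs_le_iff)

lemma RIP_S12_S1_deviation:
  assumes "n \<ge> 1" "RIP m (n ^ \<kappa>) A \<epsilon> (S12 n \<kappa>)" "x \<in> S1 n \<kappa>"
  shows "\<bar>vec_norm_sq m (mat_vec m (n ^ \<kappa>) A x) - 1\<bar> \<le> \<epsilon>"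
  using RIP_unit_deviation[OF assms(2)] assms(1,3) by (simp add: S12_def vec_norm_sq_S1)

lemma kron_unit_vectors_in_S1:
  assumes "n \<ge> 1"
  shows "kron n \<kappa> (\<lambda>l i. if i = 0 then 1 else 0) \<in> S1 n \<kappa>"
proof -
  have "vec_norm_sq n (\<lambda>i. if i = 0 then 1 else 0) = (\<Sum>i<n. if i = 0 then 1 else 0)"
    unfolding vec_norm_sq_def by (intro sum.cong) auto
  also have "\<dots> = 1"
    using assms by simp
  finally have "vec_norm_sq n (\<lambda>i. if i = 0 then 1 else 0) = 1" .
  then show ?thesis
    unfolding S1_def is_vec_def using assms by auto
qed

lemma RIP_S12_nonneg:
  assumes "n \<ge> 1" "RIP m (n ^ \<kappa>) A \<epsilon> (S12 n \<kappa>)"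
  shows "\<epsilon> \<ge> 0"
  using RIP_S12_S1_deviation[OF assms kron_unit_vectors_in_S1[OF assms(1)]] by linarith

text \<open>Polarization through the normalized sum of the two vectors, which lies in S2.\<close>
lemma RIP_S12_orthogonal_inner:
  assumes "n \<ge> 1" and RIP: "RIP m (n ^ \<kappa>) A \<epsilon> (S12 n \<kappa>)"
    and x: "x \<in> S1 n \<kappa>" and y: "y \<in> S1 n \<kappa>" and orth: "vec_inner (n ^ \<kappa>) x y = 0"
  shows "\<bar>vec_inner m (mat_vec m (n ^ \<kappa>) A x) (mat_vec m (n ^ \<kappa>) A y)\<bar> \<le> 2 * \<epsilon>"
proof -
  let ?N = "n ^ \<kappa>" and ?A = "mat_vec m (n ^ \<kappa>) A"
  have norm_sum: "vec_norm_sq ?N (\<lambda>i. x i + y i) = 2"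
    using assms by (simp add: vec_norm_sq_add vec_norm_sq_S1)
  define s where "s = (\<lambda>i. (x i + y i) / sqrt 2)"
  have "s \<in> S12 n \<kappa>"
    unfolding S12_def S2_def s_def using x y orth norm_sum by force
  moreover have "vec_norm_sq ?N s = 1"
    unfolding s_def vec_norm_sq_divide norm_sum by simp
  ultimately have "\<bar>vec_norm_sq m (?A s) - 1\<bar> \<le> \<epsilon>"
    by (rule RIP_unit_deviation[OF RIP])
  moreover have "2 * vec_norm_sq m (?A s)
      = vec_norm_sq m (?A x) + vec_norm_sq m (?A y) + 2 * vec_inner m (?A x) (?A y)"
    unfolding s_def mat_vec_add_divide vec_norm_sq_divide vec_norm_sq_add by simp
  moreover have "\<bar>vec_norm_sq m (?A x) - 1\<bar> \<le> \<epsilon>" "\<bar>vec_norm_sq m (?A y) - 1\<bar> \<le> \<epsilon>"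
    using RIP_S12_S1_deviation assms by blast+
  ultimately show ?thesis by linarith
qed

lemma RIP_S12_orthonormal_gram_deviation:
  assumes n: "n \<ge> 1" and RIP: "RIP m (n ^ \<kappa>) A \<epsilon> (S12 n \<kappa>)" and "T \<subseteq> S1 n \<kappa>"
    and orth: "\<forall>x\<in>T. \<forall>y\<in>T. vec_inner (n ^ \<kappa>) x y = (if x = y then 1 else 0)"
  shows "\<forall>x\<in>T. \<forall>y\<in>T.
           \<bar>vec_inner m (mat_vec m (n ^ \<kappa>) A x) (mat_vec m (n ^ \<kappa>) A y) - vec_inner (n ^ \<kappa>) x y\<bar> \<le> 2 * \<epsilon>"
proof (intro ballI)
  fix x y assume "x \<in> T" "y \<in> T"
  then have x: "x \<in> S1 n \<kappa>" and y: "y \<in> S1 n \<kappa>"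
    using \<open>T \<subseteq> S1 n \<kappa>\<close> by auto
  show "\<bar>vec_inner m (mat_vec m (n ^ \<kappa>) A x) (mat_vec m (n ^ \<kappa>) A y) - vec_inner (n ^ \<kappa>) x y\<bar> \<le> 2 * \<epsilon>"
  proof (cases "x = y")
    case True
    then show ?thesis
      using RIP_S12_S1_deviation[OF n RIP x] RIP_S12_nonneg[OF n RIP] vec_norm_sq_S1[OF n x]
      by (simp add: vec_norm_sq_eq_inner)
  next
    case False
    then have "vec_inner (n ^ \<kappa>) x y = 0"
      using orth \<open>x \<in> T\<close> \<open>y \<in> T\<close> by simp
    then show ?thesis
      using RIP_S12_orthogonal_inner[OF n RIP x y] by simp
  qed
qed

section \<open>Orthonormal expansions of tensors of low HOSVD rank\<close>

definition orthonormal_list :: "nat \<Rightarrow> (nat \<Rightarrow> real) list \<Rightarrow> bool" where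
  "orthonormal_list n es \<longleftrightarrow> (\<forall>e\<in>set es. is_vec n e) \<and>
     (\<forall>i<length es. \<forall>j<length es. vec_inner n (es ! i) (es ! j) = (if i = j then 1 else 0))"

lemma orthonormal_list_nth:
  assumes "orthonormal_list n es" "i < length es"
  shows "is_vec n (es ! i)" and "j < length es \<Longrightarrow> vec_inner n (es ! i) (es ! j) = (if i = j then 1 else 0)"
  using assms by (auto simp: orthonormal_list_def)

definition list_comb :: "(nat \<Rightarrow> real) list \<Rightarrow> (nat \<Rightarrow> real) \<Rightarrow> nat \<Rightarrow> real" where
  "list_comb es c = (\<lambda>x. \<Sum>i<length es. c i * (es ! i) x)"

lemma list_comb_snoc: "list_comb (es @ [u]) c = (\<lambda>x. list_comb es c x + c (length es) * u x)"
  by (simp add: list_comb_def nth_append)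

lemma list_comb_cong: "(\<And>i. i < length es \<Longrightarrow> c i = c' i) \<Longrightarrow> list_comb es c = list_comb es c'"
  unfolding list_comb_def by (auto intro!: sum.cong)

lemma list_comb_snoc_update:
  "list_comb (es @ [u]) (c(length es := a)) = (\<lambda>x. list_comb es c x + a * u x)"
proof -
  have "list_comb es (c(length es := a)) = list_comb es c"
    by (rule list_comb_cong) simp
  then show ?thesis
    unfolding list_comb_snoc by simp
qed

lemma is_vec_list_comb:
  assumes "\<forall>e\<in>set es. is_vec n e"
  shows "is_vec n (list_comb es c)"
proof -
  have "(es ! i) x = 0" if "i < length es" "x \<ge> n" for i x
    using assms that nth_mem unfolding is_vec_def by blast
  then show ?thesis
    unfolding is_vec_def list_comb_def by simp
qed

lemma orthonormal_list_snoc: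
  assumes "orthonormal_list n es" "is_vec n u" "vec_inner n u u = 1"
    and "\<forall>j<length es. vec_inner n u (es ! j) = 0"
  shows "orthonormal_list n (es @ [u])"
proof -
  have "vec_inner n (es ! i) u = 0" if "i < length es" for i
    using assms(4) that vec_inner_commute[of n u] by metis
  then show ?thesis
    using assms unfolding orthonormal_list_def by (auto simp: nth_append less_Suc_eq)
qed

lemma vec_inner_gram_schmidt_residual:
  assumes "orthonormal_list n es" "j < length es"
  shows "vec_inner n (\<lambda>x. b x - list_comb es (\<lambda>i. vec_inner n b (es ! i)) x) (es ! j) = 0"
proof -
  have "vec_inner n (list_comb es (\<lambda>i. vec_inner n b (es ! i))) (es ! j)
      = (\<Sum>i<length es. if i = j then vec_inner n b (es ! i) else 0)"
    unfolding list_comb_def vec_inner_sum_left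
    using assms by (intro sum.cong) (auto simp: orthonormal_list_def)
  then show ?thesis
    using assms(2) by (simp add: vec_inner_diff_left)
qed

lemma gram_schmidt_extend:
  assumes on: "orthonormal_list n es" and "is_vec n b"
  obtains es' where "length es' \<le> Suc (length es)" "orthonormal_list n es'" "\<exists>c. b = list_comb es' c"
    and "\<forall>c. \<exists>c'. list_comb es c = list_comb es' c'"
proof -
  define c where "c = (\<lambda>i. vec_inner n b (es ! i))"
  define w where "w = (\<lambda>x. b x - list_comb es c x)"
  have "is_vec n w"
    using assms is_vec_list_comb[of es n c] unfolding w_def is_vec_def orthonormal_list_def
    by simp
  show ?thesis
  proof (cases "w = (\<lambda>x. 0)")
    case True
    then have "b = list_comb es c"
      unfolding w_def fun_eq_iff by simp
    then show ?thesis
      using on by (intro that[of es]) auto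
  next
    case False
    define \<nu> where "\<nu> = sqrt (vec_norm_sq n w)"
    have "\<nu> > 0"
      using False vec_norm_sq_eq_0_iff[OF \<open>is_vec n w\<close>] vec_norm_sq_nonneg[of n w]
      unfolding \<nu>_def by simp
    define u where "u = (\<lambda>x. w x / \<nu>)"
    have "orthonormal_list n (es @ [u])"
    proof (rule orthonormal_list_snoc[OF on])
      show "is_vec n u"
        using \<open>is_vec n w\<close> unfolding u_def is_vec_def by simp
      show "vec_inner n u u = 1"
        using \<open>\<nu> > 0\<close> vec_norm_sq_nonneg[of n w]
        unfolding u_def \<nu>_def by (simp add: vec_norm_sq_divide flip: vec_norm_sq_eq_inner)
      show "\<forall>j<length es. vec_inner n u (es ! j) = 0"
        using vec_inner_gram_schmidt_residual[OF on]
        unfolding u_def w_def c_def vec_inner_divide_left by simp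
    qed
    moreover have "b = list_comb (es @ [u]) (c(length es := \<nu>))"
      using \<open>\<nu> > 0\<close> unfolding list_comb_snoc_update u_def w_def by simp
    moreover have "list_comb es c' = list_comb (es @ [u]) (c'(length es := 0))" for c'
      unfolding list_comb_snoc_update by simp
    ultimately show ?thesis
      using that[of "es @ [u]"] by auto
  qed
qed

lemma gram_schmidt:
  assumes "\<forall>b\<in>set bs. is_vec n b"
  shows "\<exists>es. length es \<le> length bs \<and> orthonormal_list n es \<and> (\<forall>b\<in>set bs. \<exists>c. b = list_comb es c)"
  using assms
proof (induction bs)
  case Nil
  then show ?case by (auto simp: orthonormal_list_def)
next
  case (Cons b bs)
  then obtain es where len: "length es \<le> length bs" and on: "orthonormal_list n es"
    and span: "\<forall>b\<in>set bs. \<exists>c. b = list_comb es c"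
    by auto
  obtain es' where "length es' \<le> Suc (length es)" "orthonormal_list n es'" "\<exists>c. b = list_comb es' c"
    and extend: "\<forall>c. \<exists>c'. list_comb es c = list_comb es' c'"
    using gram_schmidt_extend[OF on] Cons.prems by auto
  moreover have "\<exists>c'. b' = list_comb es' c'" if b': "b' \<in> set bs" for b'
  proof -
    obtain c where "b' = list_comb es c"
      using bspec[OF span b'] ..
    then show ?thesis
      using extend by simp
  qed
  ultimately show ?case
    using len by (intro exI[of _ es']) auto
qed

lemma vec_span_expansion:
  assumes "finite I" and "\<forall>v\<in>S. \<exists>c. \<forall>x\<in>Q. v x = (\<Sum>i\<in>I. c i * B i x)" and "u \<in> vec_span S"
  shows "\<exists>a. \<forall>x\<in>Q. u x = (\<Sum>i\<in>I. a i * B i x)"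
proof -
  obtain F cf where F: "finite F" "F \<subseteq> S" and u: "u = (\<lambda>x. \<Sum>w\<in>F. cf w * w x)"
    using assms(3) unfolding vec_span_def by blast
  obtain cc where cc: "\<forall>v\<in>S. \<forall>x\<in>Q. v x = (\<Sum>i\<in>I. cc v i * B i x)"
    using bchoice[OF assms(2)] ..
  have "\<forall>x\<in>Q. u x = (\<Sum>i\<in>I. (\<Sum>w\<in>F. cf w * cc w i) * B i x)"
  proof
    fix x assume "x \<in> Q"
    then have "u x = (\<Sum>w\<in>F. cf w * (\<Sum>i\<in>I. cc w i * B i x))"
      unfolding u using cc F by (auto intro!: sum.cong)
    then show "u x = (\<Sum>i\<in>I. (\<Sum>w\<in>F. cf w * cc w i) * B i x)"
      by (simp add: sum_distrib_left sum_distrib_right sum.swap[where A = F] mult.assoc)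
  qed
  then show ?thesis
    by (rule exI[where x = "\<lambda>i. \<Sum>w\<in>F. cf w * cc w i"])
qed

lemma subspace_dim_orthonormal_basis:
  assumes "subspace_dim n r U"
  obtains es where "length es \<le> r" "orthonormal_list n es" "\<forall>u\<in>U. \<exists>c. u = list_comb es c"
proof -
  obtain b where b: "\<forall>j<r. is_vec n (b j)" and U: "U = vec_span (b ` {..<r})"
    using assms unfolding subspace_dim_def by blast
  obtain es where len: "length es \<le> r" and on: "orthonormal_list n es"
    and span: "\<forall>v\<in>set (map b [0..<r]). \<exists>c. v = list_comb es c"
    using gram_schmidt[of "map b [0..<r]" n] b by auto
  have "\<exists>c. u = list_comb es c" if "u \<in> U" for u
  proof -
    have "\<forall>v\<in>b ` {..<r}. \<exists>c. \<forall>x\<in>UNIV. v x = (\<Sum>i<length es. c i * (es ! i) x)"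
    proof
      fix v assume "v \<in> b ` {..<r}"
      then have "v \<in> set (map b [0..<r])"
        by auto
      then obtain c where "v = list_comb es c"
        using bspec[OF span] by blast
      then show "\<exists>c. \<forall>x\<in>UNIV. v x = (\<Sum>i<length es. c i * (es ! i) x)"
        by (auto simp: list_comb_def)
    qed
    from vec_span_expansion[OF _ this] that U obtain c
      where "\<forall>x\<in>UNIV. u x = (\<Sum>i<length es. c i * (es ! i) x)"
      by blast
    then show ?thesis
      unfolding list_comb_def by blast
  qed
  then show ?thesis
    using that len on by blast
qed

lemma outer_list_comb_expansion:
  assumes "\<forall>k<d. xs k = list_comb (es k) (a k)" and "ix \<in> tensor_idx (replicate d n)"
  shows "outer n d xs ix
    = (\<Sum>\<iota>\<in>tensor_idx (map (\<lambda>k. length (es k)) [0..<d]).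
         (\<Prod>k<d. a k (\<iota> ! k)) * (\<Prod>k<d. (es k ! (\<iota> ! k)) (ix ! k)))"
proof -
  have "outer n d xs ix = (\<Prod>k<d. \<Sum>i<length (es k). a k i * (es k ! i) (ix ! k))"
    using assms by (simp add: outer_def list_comb_def)
  also have "\<dots> = (\<Sum>\<iota>\<in>tensor_idx (map (\<lambda>k. length (es k)) [0..<d]).
                    \<Prod>k<d. a k (\<iota> ! k) * (es k ! (\<iota> ! k)) (ix ! k))"
    using sum_tensor_idx_prod[where dims = "map (\<lambda>k. length (es k)) [0..<d]"
        and f = "\<lambda>k i. a k i * (es k ! i) (ix ! k)"]
    by simp
  finally show ?thesis
    by (simp add: prod.distrib)
qed

lemma hosvd_rank_le_orthonormal_expansion:
  assumes "hosvd_rank_le n d r X"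
  obtains es D where "\<forall>k<d. length (es k) \<le> r \<and> orthonormal_list n (es k)"
    and "\<forall>ix\<in>tensor_idx (replicate d n).
           X ix = (\<Sum>\<iota>\<in>tensor_idx (map (\<lambda>k. length (es k)) [0..<d]).
                     D \<iota> * (\<Prod>k<d. (es k ! (\<iota> ! k)) (ix ! k)))"
proof -
  obtain U where U: "\<forall>k<d. subspace_dim n r (U k)"
    and X: "X \<in> vec_span {outer n d xs | xs. \<forall>k<d. xs k \<in> U k}"
    using assms unfolding hosvd_rank_le_def by blast
  have "\<forall>k. \<exists>es. k < d \<longrightarrow> length es \<le> r \<and> orthonormal_list n es \<and> (\<forall>u\<in>U k. \<exists>c. u = list_comb es c)"
    using U subspace_dim_orthonormal_basis by metis
  then obtain es where es: "\<forall>k<d. length (es k) \<le> r \<and> orthonormal_list n (es k)"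
    and span: "\<forall>k<d. \<forall>u\<in>U k. \<exists>c. u = list_comb (es k) c"
    by metis
  have "\<forall>v\<in>{outer n d xs | xs. \<forall>k<d. xs k \<in> U k}.
          \<exists>c. \<forall>ix\<in>tensor_idx (replicate d n). v ix = (\<Sum>\<iota>\<in>tensor_idx (map (\<lambda>k. length (es k)) [0..<d]).
                 c \<iota> * (\<Prod>k<d. (es k ! (\<iota> ! k)) (ix ! k)))"
  proof
    fix v assume "v \<in> {outer n d xs | xs. \<forall>k<d. xs k \<in> U k}"
    then obtain xs where v: "v = outer n d xs" and xs: "\<forall>k<d. xs k \<in> U k"
      by blast
    have "\<forall>k. \<exists>c. k < d \<longrightarrow> xs k = list_comb (es k) c"
      using span xs by metis
    then obtain a where a: "\<forall>k<d. xs k = list_comb (es k) (a k)"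
      by metis
    show "\<exists>c. \<forall>ix\<in>tensor_idx (replicate d n). v ix = (\<Sum>\<iota>\<in>tensor_idx (map (\<lambda>k. length (es k)) [0..<d]).
            c \<iota> * (\<Prod>k<d. (es k ! (\<iota> ! k)) (ix ! k)))"
      unfolding v
      by (rule exI[where x = "\<lambda>\<iota>. \<Prod>k<d. a k (\<iota> ! k)"]) (simp add: outer_list_comb_expansion[OF a])
  qed
  from vec_span_expansion[OF finite_tensor_idx this X] obtain D where "\<forall>ix\<in>tensor_idx (replicate d n).
      X ix = (\<Sum>\<iota>\<in>tensor_idx (map (\<lambda>k. length (es k)) [0..<d]). D \<iota> * (\<Prod>k<d. (es k ! (\<iota> ! k)) (ix ! k)))"
    ..
  with es show ?thesis
    by (rule that)
qed

section \<open>Mode products of sums of outer products\<close>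

definition outer_sum :: "nat list \<Rightarrow> 'i set \<Rightarrow> ('i \<Rightarrow> real) \<Rightarrow> (nat \<Rightarrow> 'i \<Rightarrow> nat \<Rightarrow> real) \<Rightarrow> nat list \<Rightarrow> real"
  where "outer_sum dims I D V = (\<lambda>ix. if ix \<in> tensor_idx dims
           then \<Sum>\<iota>\<in>I. D \<iota> * (\<Prod>g<length dims. V g \<iota> (ix ! g)) else 0)"

lemma reshape_eq_outer_sum:
  assumes "n \<ge> 1" "\<kappa> \<ge> 1"
    and X: "\<forall>ix\<in>tensor_idx (replicate (d' * \<kappa>) n). X ix = (\<Sum>\<iota>\<in>I. D \<iota> * (\<Prod>k<d' * \<kappa>. E k \<iota> (ix ! k)))"
  shows "reshape n (d' * \<kappa>) \<kappa> X
           = outer_sum (replicate d' (n ^ \<kappa>)) I D (\<lambda>g \<iota>. kron n \<kappa> (\<lambda>l. E (g * \<kappa> + l) \<iota>))"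
proof (rule ext)
  fix js
  show "reshape n (d' * \<kappa>) \<kappa> X js = outer_sum (replicate d' (n ^ \<kappa>)) I D (\<lambda>g \<iota>. kron n \<kappa> (\<lambda>l. E (g * \<kappa> + l) \<iota>)) js"
  proof (cases "js \<in> tensor_idx (replicate d' (n ^ \<kappa>))")
    case js: True
    define cs where "cs = concat (map (kdigits n \<kappa>) js)"
    have len: "length js = d'"
      using js by (simp add: length_tensor_idx)
    have digit: "js ! g < n ^ \<kappa>" if "g < d'" for g
      using js that by (simp add: tensor_idx_def)
    have "(\<Prod>k<d' * \<kappa>. E k \<iota> (cs ! k)) = (\<Prod>g<d'. kron n \<kappa> (\<lambda>l. E (g * \<kappa> + l) \<iota>) (js ! g))" for \<iota>
      unfolding prod_lessThan_mult_blocks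
      using len digit by (intro prod.cong refl) (simp add: kron_def cs_def nth_concat_blocks)
    moreover have "reshape n (d' * \<kappa>) \<kappa> X js = X cs"
      using js assms(2) by (simp add: reshape_def cs_def)
    ultimately show ?thesis
      using js X concat_kdigits_in_tensor_idx[OF assms(1) js] by (simp add: outer_sum_def cs_def)
  qed (use assms(2) in \<open>simp add: reshape_def outer_sum_def\<close>)
qed

lemma prod_lessThan_remove:
  fixes F :: "nat \<Rightarrow> 'a :: comm_monoid_mult"
  assumes "j < L"
  shows "(\<Prod>g<L. F g) = F j * (\<Prod>g\<in>{..<L} - {j}. F g)"
  using assms by (simp add: prod.remove)

lemma mode_prod_outer_sum:
  assumes j: "j < length dims"
  shows "mode_prod dims j m A (outer_sum dims I D V)
           = outer_sum (dims[j := m]) I D (V(j := \<lambda>\<iota>. mat_vec m (dims ! j) A (V j \<iota>)))"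
proof (rule ext)
  fix ix
  let ?Z = "\<lambda>\<iota>. \<Prod>g\<in>{..<length dims} - {j}. V g \<iota> (ix ! g)"
  show "mode_prod dims j m A (outer_sum dims I D V) ix
      = outer_sum (dims[j := m]) I D (V(j := \<lambda>\<iota>. mat_vec m (dims ! j) A (V j \<iota>))) ix"
  proof (cases "ix \<in> tensor_idx (dims[j := m])")
    case ix: True
    have len: "length ix = length dims"
      using length_tensor_idx[OF ix] by simp
    have "ix ! j < m"
      using ix j by (auto simp: tensor_idx_def)
    have "mode_prod dims j m A (outer_sum dims I D V) ix
        = (\<Sum>i<dims ! j. (\<Sum>\<iota>\<in>I. D \<iota> * (V j \<iota> i * ?Z \<iota>)) * A (ix ! j) i)"
      using ix list_update_in_tensor_idx[OF ix] len j
      by (auto simp: mode_prod_def outer_sum_def prod_lessThan_remove[OF j] intro!: sum.cong prod.cong)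
    also have "\<dots> = (\<Sum>\<iota>\<in>I. D \<iota> * (mat_vec m (dims ! j) A (V j \<iota>) (ix ! j) * ?Z \<iota>))"
      using \<open>ix ! j < m\<close>
      by (simp add: mat_vec_def sum_distrib_left sum_distrib_right sum.swap[where A = "{..<dims ! j}"] mult_ac)
    also have "\<dots> = outer_sum (dims[j := m]) I D (V(j := \<lambda>\<iota>. mat_vec m (dims ! j) A (V j \<iota>))) ix"
      using ix j by (simp add: outer_sum_def prod_lessThan_remove)
    finally show ?thesis .
  qed (simp add: mode_prod_def outer_sum_def)
qed

lemma fro_sq_mode_expansion:
  assumes j: "j < length dims" and "finite T"
    and Z: "\<forall>t\<in>T. \<forall>ix i. Z t (ix[j := i]) = Z t ix"
  shows "fro_sq dims (\<lambda>ix. if ix \<in> tensor_idx dims then \<Sum>t\<in>T. v t (ix ! j) * Z t ix else 0)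
    = (\<Sum>t\<in>T. \<Sum>s\<in>T. vec_inner (dims ! j) (v t) (v s) *
                         (\<Sum>ix\<in>tensor_idx (dims[j := 1]). Z t ix * Z s ix))"
proof -
  let ?M = "dims ! j" and ?J = "tensor_idx (dims[j := 1])"
  have "fro_sq dims (\<lambda>ix. if ix \<in> tensor_idx dims then \<Sum>t\<in>T. v t (ix ! j) * Z t ix else 0)
      = (\<Sum>ix\<in>?J. \<Sum>i<?M. (\<Sum>t\<in>T. v t i * Z t ix)\<^sup>2)"
    unfolding fro_sq_def sum_tensor_idx_split_at[OF j]
    using j Z by (intro sum.cong refl) (simp add: length_tensor_idx list_update_in_tensor_idx)
  also have "\<dots> = (\<Sum>ix\<in>?J. \<Sum>i<?M. \<Sum>t\<in>T. \<Sum>s\<in>T. (v t i * v s i) * (Z t ix * Z s ix))"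
    by (simp add: power2_eq_square sum_product mult_ac)
  also have "\<dots> = (\<Sum>ix\<in>?J. \<Sum>t\<in>T. \<Sum>s\<in>T. \<Sum>i<?M. (v t i * v s i) * (Z t ix * Z s ix))"
    by (intro sum.cong refl, subst sum.swap, intro sum.cong refl, rule sum.swap)
  also have "\<dots> = (\<Sum>t\<in>T. \<Sum>s\<in>T. \<Sum>i<?M. \<Sum>ix\<in>?J. (v t i * v s i) * (Z t ix * Z s ix))"
    by (subst sum.swap, intro sum.cong refl, subst sum.swap, intro sum.cong refl, rule sum.swap)
  also have "\<dots> = (\<Sum>t\<in>T. \<Sum>s\<in>T. vec_inner ?M (v t) (v s) * (\<Sum>ix\<in>?J. Z t ix * Z s ix))"
    by (simp only: vec_inner_def sum_product)
  finally show ?thesis .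
qed

lemma sum_gram_deviation_bound:
  fixes G :: "'t \<Rightarrow> 't \<Rightarrow> real"
  assumes "finite T" and G: "\<forall>t\<in>T. \<forall>s\<in>T. \<bar>G t s\<bar> \<le> c"
  shows "\<bar>\<Sum>t\<in>T. \<Sum>s\<in>T. G t s * (\<Sum>x\<in>X. z t x * z s x)\<bar>
           \<le> c * card T * (\<Sum>t\<in>T. \<Sum>x\<in>X. (z t x)\<^sup>2)"
proof -
  let ?Q = "\<lambda>t s. \<Sum>x\<in>X. z t x * z s x"
  have Q: "\<bar>?Q t s\<bar> \<le> (?Q t t + ?Q s s) / 2" for t s
  proof -
    have "\<bar>z t x * z s x\<bar> \<le> (z t x * z t x + z s x * z s x) / 2" for x
      using sum_squares_bound[of "\<bar>z t x\<bar>" "\<bar>z s x\<bar>"] by (simp add: abs_mult power2_eq_square)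
    then have "\<bar>?Q t s\<bar> \<le> (\<Sum>x\<in>X. (z t x * z t x + z s x * z s x) / 2)"
      by (intro order_trans[OF sum_abs] sum_mono)
    then show ?thesis
      by (simp add: sum_divide_distrib[symmetric] sum.distrib)
  qed
  have "\<bar>\<Sum>t\<in>T. \<Sum>s\<in>T. G t s * ?Q t s\<bar> \<le> (\<Sum>t\<in>T. \<Sum>s\<in>T. c * ((?Q t t + ?Q s s) / 2))"
  proof (intro order_trans[OF sum_abs] sum_mono order_trans[OF sum_abs])
    fix t s assume "t \<in> T" "s \<in> T"
    then show "\<bar>G t s * ?Q t s\<bar> \<le> c * ((?Q t t + ?Q s s) / 2)"
      unfolding abs_mult using G Q by (intro mult_mono) (auto intro: order_trans[OF abs_ge_zero])
  qed
  also have "\<dots> = c * card T * (\<Sum>t\<in>T. ?Q t t)"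
    by (simp add: sum_distrib_left[symmetric] sum_divide_distrib[symmetric] sum.distrib)
  finally show ?thesis
    by (simp add: power2_eq_square)
qed

lemma outer_sum_group_by_mode_factor:
  assumes j: "j < length dims" and "finite I" and V: "\<forall>\<iota>\<in>I. V j \<iota> = W (h \<iota>)"
  shows "outer_sum dims I D V = (\<lambda>ix. if ix \<in> tensor_idx dims
           then \<Sum>t\<in>h ` I. W t (ix ! j) *
                  (\<Sum>\<iota>\<in>{\<iota>\<in>I. h \<iota> = t}. D \<iota> * (\<Prod>g\<in>{..<length dims} - {j}. V g \<iota> (ix ! g)))
           else 0)"
proof (rule ext)
  fix ix
  let ?Z = "\<lambda>\<iota>. \<Prod>g\<in>{..<length dims} - {j}. V g \<iota> (ix ! g)"
  have "(\<Sum>\<iota>\<in>I. D \<iota> * (\<Prod>g<length dims. V g \<iota> (ix ! g)))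
      = (\<Sum>\<iota>\<in>I. W (h \<iota>) (ix ! j) * (D \<iota> * ?Z \<iota>))"
    using V by (intro sum.cong refl) (simp add: prod_lessThan_remove[OF j])
  also have "\<dots> = (\<Sum>t\<in>h ` I. \<Sum>\<iota>\<in>{\<iota>\<in>I. h \<iota> = t}. W (h \<iota>) (ix ! j) * (D \<iota> * ?Z \<iota>))"
    by (rule sum.group[symmetric]) (use \<open>finite I\<close> in auto)
  also have "\<dots> = (\<Sum>t\<in>h ` I. \<Sum>\<iota>\<in>{\<iota>\<in>I. h \<iota> = t}. W t (ix ! j) * (D \<iota> * ?Z \<iota>))"
    by (intro sum.cong refl) simp
  finally show "outer_sum dims I D V ix = (if ix \<in> tensor_idx dims
      then \<Sum>t\<in>h ` I. W t (ix ! j) * (\<Sum>\<iota>\<in>{\<iota>\<in>I. h \<iota> = t}. D \<iota> * ?Z \<iota>) else 0)"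
    by (simp add: outer_sum_def sum_distrib_left)
qed

lemma prod_fun_upd_other:
  "(\<Prod>g\<in>S - {j}. (V(j := F)) g \<iota> (ix ! g)) = (\<Prod>g\<in>S - {j}. V g \<iota> (ix ! g))"
  by (rule prod.cong) auto

text \<open>Grouping the terms by their mode-j factor t, both squared norms become quadratic forms
  in the Gram matrix of the t, respectively of the A t, with the same positive semidefinite
  weights; orthonormality of the t reduces the first one to its diagonal.\<close>
lemma fro_sq_mode_prod_outer_sum_deviation:
  assumes j: "j < length dims" and I: "finite I"
    and orth: "\<forall>u\<in>V j ` I. \<forall>v\<in>V j ` I. vec_inner (dims ! j) u v = (if u = v then 1 else 0)"
    and gram: "\<forall>u\<in>V j ` I. \<forall>v\<in>V j ` I.
      \<bar>vec_inner m (mat_vec m (dims ! j) A u) (mat_vec m (dims ! j) A v) - vec_inner (dims ! j) u v\<bar> \<le> c"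
  shows "\<bar>fro_sq (dims[j := m]) (mode_prod dims j m A (outer_sum dims I D V)) - fro_sq dims (outer_sum dims I D V)\<bar>
           \<le> c * card (V j ` I) * fro_sq dims (outer_sum dims I D V)"
proof -
  let ?T = "V j ` I" and ?J = "tensor_idx (dims[j := 1])" and ?A = "mat_vec m (dims ! j) A"
  define Z where "Z = (\<lambda>t ix. \<Sum>\<iota>\<in>{\<iota>\<in>I. V j \<iota> = t}. D \<iota> * (\<Prod>g\<in>{..<length dims} - {j}. V g \<iota> (ix ! g)))"
  have fin: "finite ?T"
    using I by simp
  have Z: "\<forall>t\<in>?T. \<forall>ix i. Z t (ix[j := i]) = Z t ix"
    unfolding Z_def by (auto intro!: sum.cong prod.cong)
  have Y: "outer_sum dims I D V = (\<lambda>ix. if ix \<in> tensor_idx dims then \<Sum>t\<in>?T. t (ix ! j) * Z t ix else 0)"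
    unfolding Z_def by (rule outer_sum_group_by_mode_factor[OF j I]) simp
  have AY: "mode_prod dims j m A (outer_sum dims I D V)
      = (\<lambda>ix. if ix \<in> tensor_idx (dims[j := m]) then \<Sum>t\<in>?T. ?A t (ix ! j) * Z t ix else 0)"
  proof -
    have "outer_sum (dims[j := m]) I D (V(j := \<lambda>\<iota>. ?A (V j \<iota>))) = (\<lambda>ix. if ix \<in> tensor_idx (dims[j := m])
        then \<Sum>t\<in>?T. ?A t (ix ! j) * (\<Sum>\<iota>\<in>{\<iota>\<in>I. V j \<iota> = t}.
               D \<iota> * (\<Prod>g\<in>{..<length (dims[j := m])} - {j}. (V(j := \<lambda>\<iota>. ?A (V j \<iota>))) g \<iota> (ix ! g)))
        else 0)"
      by (rule outer_sum_group_by_mode_factor) (use j I in auto)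
    then show ?thesis
      unfolding mode_prod_outer_sum[OF j] Z_def prod_fun_upd_other length_list_update .
  qed
  have gram_Y: "fro_sq dims (outer_sum dims I D V)
      = (\<Sum>t\<in>?T. \<Sum>s\<in>?T. vec_inner (dims ! j) t s * (\<Sum>ix\<in>?J. Z t ix * Z s ix))"
    unfolding Y using fro_sq_mode_expansion[OF j fin Z, where v = id] by (simp cong: if_cong)
  also have "\<dots> = (\<Sum>t\<in>?T. \<Sum>s\<in>?T. if t = s then \<Sum>ix\<in>?J. Z t ix * Z s ix else 0)"
    using orth by (intro sum.cong refl) (simp add: Ball_def)
  also have "\<dots> = (\<Sum>t\<in>?T. \<Sum>ix\<in>?J. (Z t ix)\<^sup>2)"
    using fin by (simp add: power2_eq_square)
  finally have norm_Y: "fro_sq dims (outer_sum dims I D V) = (\<Sum>t\<in>?T. \<Sum>ix\<in>?J. (Z t ix)\<^sup>2)" .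
  have gram_AY: "fro_sq (dims[j := m]) (mode_prod dims j m A (outer_sum dims I D V))
      = (\<Sum>t\<in>?T. \<Sum>s\<in>?T. vec_inner m (?A t) (?A s) * (\<Sum>ix\<in>?J. Z t ix * Z s ix))"
    unfolding AY using fro_sq_mode_expansion[where dims = "dims[j := m]" and v = ?A, OF _ fin Z] j
    by simp
  have "fro_sq (dims[j := m]) (mode_prod dims j m A (outer_sum dims I D V)) - fro_sq dims (outer_sum dims I D V)
      = (\<Sum>t\<in>?T. \<Sum>s\<in>?T. (vec_inner m (?A t) (?A s) - vec_inner (dims ! j) t s) * (\<Sum>ix\<in>?J. Z t ix * Z s ix))"
    unfolding gram_AY gram_Y by (simp add: sum_subtractf left_diff_distrib)
  then show ?thesis
    unfolding norm_Y using sum_gram_deviation_bound[OF fin gram] by simp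
qed

lemma replicate_append_replicate_at:
  assumes "j < d'"
  shows "length (replicate j m @ replicate (d' - j) N) = d'"
    and "(replicate j m @ replicate (d' - j) N) ! j = N"
    and "(replicate j m @ replicate (d' - j) N)[j := m] = replicate (Suc j) m @ replicate (d' - Suc j) N"
proof -
  have "replicate (d' - j) N = N # replicate (d' - Suc j) N"
    using assms by (simp add: Suc_diff_Suc flip: replicate_Suc)
  then show "length (replicate j m @ replicate (d' - j) N) = d'"
    and "(replicate j m @ replicate (d' - j) N) ! j = N"
    and "(replicate j m @ replicate (d' - j) N)[j := m] = replicate (Suc j) m @ replicate (d' - Suc j) N"
    using assms by (simp_all add: nth_append list_update_append replicate_append_same)
qed

lemma fold_mode_prod_outer_sum:
  assumes "j \<le> d'"
  shows "fold (\<lambda>j Y. mode_prod (replicate j m @ replicate (d' - j) N) j m (As j) Y) [0..<j]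
           (outer_sum (replicate d' N) I D W)
       = outer_sum (replicate j m @ replicate (d' - j) N) I D
           (\<lambda>g \<iota>. if g < j then mat_vec m N (As g) (W g \<iota>) else W g \<iota>)"
  using assms
proof (induction j)
  case (Suc j)
  let ?dims = "replicate j m @ replicate (d' - j) N"
  have "j < length ?dims" "?dims ! j = N" "?dims[j := m] = replicate (Suc j) m @ replicate (d' - Suc j) N"
    using Suc.prems replicate_append_replicate_at[of j d'] by simp_all
  moreover have "(\<lambda>g \<iota>. if g < j then mat_vec m N (As g) (W g \<iota>) else W g \<iota>)
      (j := \<lambda>\<iota>. mat_vec m N (As j) (W j \<iota>))
      = (\<lambda>g \<iota>. if g < Suc j then mat_vec m N (As g) (W g \<iota>) else W g \<iota>)"
    by (auto simp: fun_eq_iff less_Suc_eq)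
  ultimately show ?case
    using Suc by (simp add: mode_prod_outer_sum)
qed simp

lemma relative_steps_power_bounds:
  fixes F :: "nat \<Rightarrow> real"
  assumes steps: "\<forall>j<k. \<bar>F (Suc j) - F j\<bar> \<le> a * F j" and "0 \<le> a" "a \<le> 1" "F 0 \<ge> 0"
  shows "(1 - a) ^ k * F 0 \<le> F k \<and> F k \<le> (1 + a) ^ k * F 0"
  using steps
proof (induction k)
  case (Suc k)
  then have lower: "(1 - a) ^ k * F 0 \<le> F k" and upper: "F k \<le> (1 + a) ^ k * F 0"
    and step: "\<bar>F (Suc k) - F k\<bar> \<le> a * F k"
    by auto
  have "(1 - a) ^ Suc k * F 0 \<le> (1 - a) * F k"
    using lower assms(3) by (simp add: mult_left_mono mult.assoc)
  also have "\<dots> \<le> F (Suc k)"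
    using step by (simp add: algebra_simps abs_le_iff)
  finally have "(1 - a) ^ Suc k * F 0 \<le> F (Suc k)" .
  moreover have "F (Suc k) \<le> (1 + a) * F k"
    using step by (simp add: algebra_simps abs_le_iff)
  moreover have "(1 + a) * F k \<le> (1 + a) ^ Suc k * F 0"
    using upper assms(2) by (simp add: mult_left_mono mult.assoc)
  ultimately show ?case
    by linarith
qed simp

lemma fro_sq_multi_mode_outer_sum_bounds:
  fixes W :: "nat \<Rightarrow> 'i \<Rightarrow> nat \<Rightarrow> real" and D :: "'i \<Rightarrow> real"
  assumes I: "finite I" and "0 \<le> a" "a \<le> 1"
    and orth: "\<forall>g<d'. \<forall>u\<in>W g ` I. \<forall>v\<in>W g ` I. vec_inner N u v = (if u = v then 1 else 0)"
    and gram: "\<forall>g<d'. \<forall>u\<in>W g ` I. \<forall>v\<in>W g ` I.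
      \<bar>vec_inner m (mat_vec m N (As g) u) (mat_vec m N (As g) v) - vec_inner N u v\<bar> \<le> c"
    and card: "\<forall>g<d'. c * card (W g ` I) \<le> a"
  defines "F \<equiv> fro_sq (replicate d' N) (outer_sum (replicate d' N) I D W)"
  shows "(1 - a) ^ d' * F \<le> fro_sq (replicate d' m) (multi_mode d' m N As (outer_sum (replicate d' N) I D W))
       \<and> fro_sq (replicate d' m) (multi_mode d' m N As (outer_sum (replicate d' N) I D W)) \<le> (1 + a) ^ d' * F"
proof -
  define dims where "dims = (\<lambda>j. replicate j m @ replicate (d' - j) N)"
  define V where "V = (\<lambda>j g \<iota>. if g < j then mat_vec m N (As g) (W g \<iota>) else W g \<iota>)"
  define G where "G = (\<lambda>j. fro_sq (dims j) (outer_sum (dims j) I D (V j)))"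
  have "\<bar>G (Suc j) - G j\<bar> \<le> a * G j" if j: "j < d'" for j
  proof -
    have len: "j < length (dims j)" and N: "dims j ! j = N"
      and upd: "(dims j)[j := m] = dims (Suc j)"
      using j replicate_append_replicate_at[of j d'] by (simp_all add: dims_def)
    have "V j j = W j" "(V j)(j := \<lambda>\<iota>. mat_vec m N (As j) (V j j \<iota>)) = V (Suc j)"
      by (auto simp: V_def fun_eq_iff less_Suc_eq)
    then have "\<bar>G (Suc j) - G j\<bar> \<le> c * card (W j ` I) * G j"
      using fro_sq_mode_prod_outer_sum_deviation[OF len I, where V = "V j" and A = "As j" and c = c and m = m and D = D]
        orth gram j
      unfolding G_def N upd mode_prod_outer_sum[OF len] by simp
    moreover have "G j \<ge> 0" and "c * card (W j ` I) \<le> a"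
      using card j by (auto simp: G_def fro_sq_def sum_nonneg)
    ultimately show ?thesis
      by (meson mult_right_mono order_trans)
  qed
  moreover have "G 0 = F"
    by (simp add: G_def F_def dims_def V_def)
  moreover have "G d' = fro_sq (replicate d' m) (multi_mode d' m N As (outer_sum (replicate d' N) I D W))"
    using fold_mode_prod_outer_sum[where j = d' and d' = d' and m = m and N = N and As = As and I = I and D = D and W = W]
    by (simp add: G_def dims_def V_def multi_mode_def)
  moreover have "F \<ge> 0"
    by (simp add: F_def fro_sq_def sum_nonneg)
  ultimately show ?thesis
    using relative_steps_power_bounds[of d' G a] assms(2,3) by simp
qed

lemma block_index_less:
  fixes g l d' \<kappa> :: nat
  assumes "g < d'" "l < \<kappa>"
  shows "g * \<kappa> + l < d' * \<kappa>"
proof -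
  have "(g + 1) * \<kappa> \<le> d' * \<kappa>"
    using assms(1) by (intro mult_right_mono) auto
  then show ?thesis
    using assms(2) by simp
qed

lemma tensor_idx_block:
  assumes "\<iota> \<in> tensor_idx (map p [0..<d' * \<kappa>])" "g < d'"
  shows "map (\<lambda>l. \<iota> ! (g * \<kappa> + l)) [0..<\<kappa>] \<in> tensor_idx (map (\<lambda>l. p (g * \<kappa> + l)) [0..<\<kappa>])"
  using assms block_index_less[OF assms(2)] by (simp add: tensor_idx_def)

lemma kron_orthonormal_in_S1:
  assumes "\<forall>l<\<kappa>. orthonormal_list n (es l)" and "t \<in> tensor_idx (map (\<lambda>l. length (es l)) [0..<\<kappa>])"
  shows "kron n \<kappa> (\<lambda>l. es l ! (t ! l)) \<in> S1 n \<kappa>"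
proof -
  have "\<forall>l<\<kappa>. is_vec n (es l ! (t ! l)) \<and> vec_norm_sq n (es l ! (t ! l)) = 1"
    using assms orthonormal_list_nth by (simp add: tensor_idx_def vec_norm_sq_eq_inner)
  then show ?thesis
    unfolding S1_def by blast
qed

lemma vec_inner_kron_orthonormal:
  assumes n: "n \<ge> 1" and es: "\<forall>l<\<kappa>. orthonormal_list n (es l)"
    and t: "t \<in> tensor_idx (map (\<lambda>l. length (es l)) [0..<\<kappa>])"
    and s: "s \<in> tensor_idx (map (\<lambda>l. length (es l)) [0..<\<kappa>])"
  shows "vec_inner (n ^ \<kappa>) (kron n \<kappa> (\<lambda>l. es l ! (t ! l))) (kron n \<kappa> (\<lambda>l. es l ! (s ! l)))
           = (if t = s then 1 else 0)"
proof -
  have "vec_inner n (es l ! (t ! l)) (es l ! (s ! l)) = (if t ! l = s ! l then 1 else 0)" if "l < \<kappa>" for l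
    using es t s that orthonormal_list_nth(2) by (simp add: tensor_idx_def)
  moreover have "(\<forall>l<\<kappa>. t ! l = s ! l) \<longleftrightarrow> t = s"
    using t s by (auto simp: tensor_idx_def intro: nth_equalityI)
  ultimately show ?thesis
    unfolding vec_inner_kron[OF n] by auto
qed

lemma orthonormal_image:
  assumes "\<forall>t\<in>T. \<forall>s\<in>T. vec_inner N (K t) (K s) = (if t = s then 1 else 0)"
  shows "\<forall>u\<in>K ` T. \<forall>v\<in>K ` T. vec_inner N u v = (if u = v then 1 else 0)"
proof (intro ballI)
  fix u v assume "u \<in> K ` T" "v \<in> K ` T"
  then obtain t s where "t \<in> T" "s \<in> T" and uv: "u = K t" "v = K s"
    by blast
  then show "vec_inner N u v = (if u = v then 1 else 0)"
    using assms by (cases "t = s") (auto simp: uv, metis zero_neq_one)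
qed

lemma kron_blocks_orthonormal:
  assumes n: "n \<ge> 1" and g: "g < d'"
    and es: "\<forall>k<d' * \<kappa>. length (es k) \<le> r \<and> orthonormal_list n (es k)"
  defines "I \<equiv> tensor_idx (map (\<lambda>k. length (es k)) [0..<d' * \<kappa>])"
    and "W \<equiv> \<lambda>\<iota>. kron n \<kappa> (\<lambda>l. es (g * \<kappa> + l) ! (\<iota> ! (g * \<kappa> + l)))"
  shows "W ` I \<subseteq> S1 n \<kappa>"
    and "\<forall>u\<in>W ` I. \<forall>v\<in>W ` I. vec_inner (n ^ \<kappa>) u v = (if u = v then 1 else 0)"
    and "card (W ` I) \<le> r ^ \<kappa>"
proof -
  let ?T = "tensor_idx (map (\<lambda>l. length (es (g * \<kappa> + l))) [0..<\<kappa>])"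
  let ?K = "\<lambda>t. kron n \<kappa> (\<lambda>l. es (g * \<kappa> + l) ! (t ! l))"
  have es': "\<forall>l<\<kappa>. orthonormal_list n (es (g * \<kappa> + l))"
    using es block_index_less[OF g] by blast
  have "W \<iota> = ?K (map (\<lambda>l. \<iota> ! (g * \<kappa> + l)) [0..<\<kappa>])" for \<iota>
    unfolding W_def by (rule kron_cong) simp
  then have sub: "W ` I \<subseteq> ?K ` ?T"
    using tensor_idx_block[OF _ g] unfolding I_def by blast
  have "?K ` ?T \<subseteq> S1 n \<kappa>"
    using kron_orthonormal_in_S1[OF es'] by (intro image_subsetI)
  with sub show "W ` I \<subseteq> S1 n \<kappa>"
    by (rule order_trans)
  have "\<forall>u\<in>?K ` ?T. \<forall>v\<in>?K ` ?T. vec_inner (n ^ \<kappa>) u v = (if u = v then 1 else 0)"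
    using vec_inner_kron_orthonormal[OF n es'] by (intro orthonormal_image ballI)
  then show "\<forall>u\<in>W ` I. \<forall>v\<in>W ` I. vec_inner (n ^ \<kappa>) u v = (if u = v then 1 else 0)"
    using sub by blast
  have "?T \<subseteq> tensor_idx (replicate \<kappa> r)"
    using es block_index_less[OF g] by (auto simp: tensor_idx_def intro: less_le_trans)
  then have "card (W ` I) \<le> card (tensor_idx (replicate \<kappa> r))"
    using sub by (meson card_image_le card_mono finite_imageI finite_tensor_idx order_trans)
  then show "card (W ` I) \<le> r ^ \<kappa>"
    by (simp add: card_tensor_idx)
qed

lemma one_plus_power_mult_le:
  fixes a :: real
  assumes "a \<ge> 0"
  shows "(1 + a) ^ k * (1 - real k * a) \<le> 1"
proof (induction k)
  case (Suc k)
  have "(1 + a) * (1 - real (Suc k) * a) \<le> 1 - real k * a"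
    using assms by (simp add: algebra_simps)
  then have "(1 + a) ^ Suc k * (1 - real (Suc k) * a) \<le> (1 + a) ^ k * (1 - real k * a)"
    using assms by (simp add: mult_left_mono mult.assoc)
  with Suc show ?case
    by linarith
qed simp

lemma one_minus_plus_power_bounds:
  fixes a \<delta> :: real
  assumes "0 \<le> a" and small: "2 * real k * a \<le> \<delta>" "\<delta> \<le> 1"
  shows "1 - \<delta> \<le> (1 - a) ^ k" and "(1 + a) ^ k \<le> 1 + \<delta>"
proof -
  have "0 \<le> real k * a"
    using assms(1) by simp
  then have "1 - \<delta> \<le> 1 - real k * a"
    using small by linarith
  also have "\<dots> \<le> (1 - a) ^ k"
  proof (cases "k = 0")
    case False
    then have "a \<le> real k * a"
      using assms(1) mult_right_mono[of 1 "real k" a] by simp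
    then have "a \<le> 1"
      using small by linarith
    then show ?thesis
      using Bernoulli_inequality[of "- a" k] by simp
  qed simp
  finally show "1 - \<delta> \<le> (1 - a) ^ k" .
  define x where "x = real k * a"
  have "0 \<le> x" "x \<le> 1 / 2"
    using assms by (simp_all add: x_def)
  then have "0 \<le> x * (1 - 2 * x)"
    by simp
  moreover have "(1 + 2 * x) * (1 - x) = 1 + x * (1 - 2 * x)"
    by (simp add: algebra_simps)
  ultimately have "1 \<le> (1 + 2 * x) * (1 - x)"
    by simp
  then have "(1 + a) ^ k * (1 - x) \<le> (1 + 2 * x) * (1 - x)"
    using one_plus_power_mult_le[OF assms(1), of k] by (simp add: x_def)
  then have "(1 + a) ^ k \<le> 1 + 2 * x"
    using \<open>x \<le> 1 / 2\<close> by simp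
  then show "(1 + a) ^ k \<le> 1 + \<delta>"
    using small(1) by (simp add: x_def)
qed

lemma fro_sq_multi_mode_reshape_bounds:
  assumes n: "n \<ge> 1" and "\<kappa> \<ge> 1" and "hosvd_rank_le n (d' * \<kappa>) r X"
    and RIP: "\<forall>g<d'. RIP m (n ^ \<kappa>) (As g) \<epsilon> (S12 n \<kappa>)" and "\<epsilon> \<ge> 0"
    and small: "2 * \<epsilon> * real r ^ \<kappa> \<le> 1"
  defines "a \<equiv> 2 * \<epsilon> * real r ^ \<kappa>"
  shows "(1 - a) ^ d' * fro_sq (replicate (d' * \<kappa>) n) X
           \<le> fro_sq (replicate d' m) (multi_mode d' m (n ^ \<kappa>) As (reshape n (d' * \<kappa>) \<kappa> X))
       \<and> fro_sq (replicate d' m) (multi_mode d' m (n ^ \<kappa>) As (reshape n (d' * \<kappa>) \<kappa> X))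
           \<le> (1 + a) ^ d' * fro_sq (replicate (d' * \<kappa>) n) X"
proof -
  obtain es D where es: "\<forall>k<d' * \<kappa>. length (es k) \<le> r \<and> orthonormal_list n (es k)"
    and X: "\<forall>ix\<in>tensor_idx (replicate (d' * \<kappa>) n).
              X ix = (\<Sum>\<iota>\<in>tensor_idx (map (\<lambda>k. length (es k)) [0..<d' * \<kappa>]).
                        D \<iota> * (\<Prod>k<d' * \<kappa>. (es k ! (\<iota> ! k)) (ix ! k)))"
    using assms(3) by (rule hosvd_rank_le_orthonormal_expansion)
  define I where "I = tensor_idx (map (\<lambda>k. length (es k)) [0..<d' * \<kappa>])"
  define W where "W = (\<lambda>g \<iota>. kron n \<kappa> (\<lambda>l. es (g * \<kappa> + l) ! (\<iota> ! (g * \<kappa> + l))))"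
  have blocks: "W g ` I \<subseteq> S1 n \<kappa>"
      "\<forall>u\<in>W g ` I. \<forall>v\<in>W g ` I. vec_inner (n ^ \<kappa>) u v = (if u = v then 1 else 0)"
      "card (W g ` I) \<le> r ^ \<kappa>"
    if "g < d'" for g
    using kron_blocks_orthonormal[OF n that es] unfolding I_def W_def by simp_all
  have "(1 - a) ^ d' * fro_sq (replicate d' (n ^ \<kappa>)) (outer_sum (replicate d' (n ^ \<kappa>)) I D W)
        \<le> fro_sq (replicate d' m) (multi_mode d' m (n ^ \<kappa>) As (outer_sum (replicate d' (n ^ \<kappa>)) I D W))
      \<and> fro_sq (replicate d' m) (multi_mode d' m (n ^ \<kappa>) As (outer_sum (replicate d' (n ^ \<kappa>)) I D W))
        \<le> (1 + a) ^ d' * fro_sq (replicate d' (n ^ \<kappa>)) (outer_sum (replicate d' (n ^ \<kappa>)) I D W)"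
  proof (rule fro_sq_multi_mode_outer_sum_bounds[where c = "2 * \<epsilon>"])
    show "finite I" "0 \<le> a" "a \<le> 1"
      using \<open>\<epsilon> \<ge> 0\<close> small by (simp_all add: I_def a_def)
    show "\<forall>g<d'. \<forall>u\<in>W g ` I. \<forall>v\<in>W g ` I. vec_inner (n ^ \<kappa>) u v = (if u = v then 1 else 0)"
      by (intro allI impI blocks(2))
    show "\<forall>g<d'. \<forall>u\<in>W g ` I. \<forall>v\<in>W g ` I.
        \<bar>vec_inner m (mat_vec m (n ^ \<kappa>) (As g) u) (mat_vec m (n ^ \<kappa>) (As g) v) - vec_inner (n ^ \<kappa>) u v\<bar>
          \<le> 2 * \<epsilon>"
    proof (intro allI impI)
      fix g assume g: "g < d'"
      show "\<forall>u\<in>W g ` I. \<forall>v\<in>W g ` I.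
          \<bar>vec_inner m (mat_vec m (n ^ \<kappa>) (As g) u) (mat_vec m (n ^ \<kappa>) (As g) v) - vec_inner (n ^ \<kappa>) u v\<bar>
            \<le> 2 * \<epsilon>"
        using RIP_S12_orthonormal_gram_deviation[OF n _ blocks(1,2)[OF g]] RIP g by simp
    qed
    show "\<forall>g<d'. 2 * \<epsilon> * real (card (W g ` I)) \<le> a"
      using blocks(3) \<open>\<epsilon> \<ge> 0\<close> unfolding a_def
      by (simp add: mult_left_mono flip: of_nat_power)
  qed
  moreover have "reshape n (d' * \<kappa>) \<kappa> X = outer_sum (replicate d' (n ^ \<kappa>)) I D W"
    unfolding I_def W_def using X by (intro reshape_eq_outer_sum n \<open>\<kappa> \<ge> 1\<close>) simp
  ultimately show ?thesis
    using fro_sq_reshape[OF n \<open>\<kappa> \<ge> 1\<close>, of d' X] by simp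
qed

lemma multi_mode_reshape_TRIP:
  assumes "n \<ge> 1" "\<kappa> \<ge> 1" "d' \<ge> 1"
    and RIP: "\<forall>g<d'. RIP m (n ^ \<kappa>) (As g) \<epsilon> (S12 n \<kappa>)"
    and "4 * real d' * real r ^ \<kappa> * \<epsilon> \<le> \<delta>" "\<delta> \<le> 1"
    and "hosvd_rank_le n (d' * \<kappa>) r X"
  shows "(1 - \<delta>) * fro_sq (replicate (d' * \<kappa>) n) X
           \<le> fro_sq (replicate d' m) (multi_mode d' m (n ^ \<kappa>) As (reshape n (d' * \<kappa>) \<kappa> X))
       \<and> fro_sq (replicate d' m) (multi_mode d' m (n ^ \<kappa>) As (reshape n (d' * \<kappa>) \<kappa> X))
           \<le> (1 + \<delta>) * fro_sq (replicate (d' * \<kappa>) n) X"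
proof -
  define a where "a = 2 * \<epsilon> * real r ^ \<kappa>"
  have "RIP m (n ^ \<kappa>) (As 0) \<epsilon> (S12 n \<kappa>)"
    using RIP \<open>d' \<ge> 1\<close> by simp
  then have "\<epsilon> \<ge> 0"
    by (rule RIP_S12_nonneg[OF assms(1)])
  then have "0 \<le> a" "2 * real d' * a \<le> \<delta>"
    using assms(5) by (simp_all add: a_def mult_ac)
  then have "1 - \<delta> \<le> (1 - a) ^ d'" "(1 + a) ^ d' \<le> 1 + \<delta>" "a \<le> 1"
    using one_minus_plus_power_bounds[of a d' \<delta>] \<open>d' \<ge> 1\<close> \<open>\<delta> \<le> 1\<close> mult_right_mono[of 1 "real d'" a]
    by simp_all
  moreover note fro_sq_multi_mode_reshape_bounds[OF assms(1,2,7) RIP \<open>\<epsilon> \<ge> 0\<close>, folded a_def, OF \<open>a \<le> 1\<close>]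
  moreover have "0 \<le> fro_sq (replicate (d' * \<kappa>) n) X"
    by (simp add: fro_sq_def sum_nonneg)
  ultimately show ?thesis
    by (meson mult_right_mono order_trans)
qed

theorem theorem1:
  fixes d n \<kappa> r m :: nat and \<epsilon> \<delta> :: real
    and As :: "nat \<Rightarrow> nat \<Rightarrow> nat \<Rightarrow> real"
  assumes "d \<ge> 1" and "n \<ge> 1" and "\<kappa> \<ge> 1" and "\<kappa> dvd d" and "r \<ge> 2"
    and "\<forall>i < d div \<kappa>. RIP m (n ^ \<kappa>) (As i) \<epsilon> (S12 n \<kappa>)"
    and "\<delta> = 4 * real (d div \<kappa>) * real r ^ d * \<epsilon>"
    and "\<delta> < 1"
  shows "\<forall>X. hosvd_rank_le n d r X \<longrightarrow>
           (1 - \<delta>) * fro_sq (replicate d n) X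
             \<le> fro_sq (replicate (d div \<kappa>) m) (multi_mode (d div \<kappa>) m (n ^ \<kappa>) As (reshape n d \<kappa> X)) \<and>
           fro_sq (replicate (d div \<kappa>) m) (multi_mode (d div \<kappa>) m (n ^ \<kappa>) As (reshape n d \<kappa> X))
             \<le> (1 + \<delta>) * fro_sq (replicate d n) X"
proof -
  obtain d' where d: "d = d' * \<kappa>"
    using assms(4) by (metis dvd_def mult.commute)
  then have d': "d div \<kappa> = d'" and "d' \<ge> 1"
    using assms(1,3) by (simp, cases d', simp_all)
  have "RIP m (n ^ \<kappa>) (As 0) \<epsilon> (S12 n \<kappa>)"
    using assms(6) \<open>d' \<ge> 1\<close> d' by simp
  then have "\<epsilon> \<ge> 0"
    by (rule RIP_S12_nonneg[OF assms(2)])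
  moreover have "real r ^ \<kappa> \<le> real r ^ d"
    using assms(5) d \<open>d' \<ge> 1\<close> by (intro power_increasing) auto
  ultimately have "4 * real d' * real r ^ \<kappa> * \<epsilon> \<le> \<delta>"
    using assms(7) d' by (simp add: mult_left_mono mult_right_mono)
  then show ?thesis
    using multi_mode_reshape_TRIP[OF assms(2,3) \<open>d' \<ge> 1\<close>, of m As \<epsilon> r \<delta>] assms(6,8) d'
    unfolding d by simp
qed

end
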